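(* Let $\mathcal M$ be a universally ex-post IC-IR single-item mechanism in an interdependent-values setting. Then under no-overbidding $\mathcal M$ is dominant-strategy incentive compatible: for every signal profile $\mathbf s$, every bid profile $\mathbf b$ with $\mathbf b\le\mathbf s$ coordinatewise, and every bidder $i$, $$\mathbb E\big[u_i((s_i,\mathbf b_{-i});\mathbf s)\big]\ge\mathbb E\big[u_i(\mathbf b;\mathbf s)\big],$$ where expectations are over the randomness of $\mathcal M$.
   Context: Single-item interdependent-values setting: bidders $i\in[n]$ have private signals $s_i\in S_i\subseteq\mathbb R_{\ge0}$ (intervals) and publicly known valuations $v_i:S_1\times\dots\times S_n\to\mathbb R_{\ge0}$, weakly increasing in every coordinate and strictly increasing in $s_i$. A deterministic mechanism $(x,p)$ solicits bids $b_i\in S_i$, outputs $x_i(\mathbf b)\in\{0,1\}$ with $\sum_ix_i(\mathbf b)\le1$ and payments $p_i(\mathbf b)$; utility $u_i(\mathbf b;\mathbf s)=x_i(\mathbf b)v_i(\mathbf s)-p_i(\mathbf b)$. It is ex-post IC-IR if for every $\mathbf s$, every $i$ and every $b_i\in S_i$: $x_i(\mathbf s)v_i(\mathbf s)-p_i(\mathbf s)\ge\max\{x_i(b_i,\mathbf s_{-i})v_i(\mathbf s)-p_i(b_i,\mathbf s_{-i}),0\}$. A randomized mechanism is universally ex-post IC-IR if it is a probability distribution over deterministic ex-post IC-IR mechanisms. *)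

theory Defs
  imports "HOL-Probability.Probability"
begin

definition profiles :: "('i \<Rightarrow> real set) \<Rightarrow> ('i \<Rightarrow> real) set" where
  "profiles S = {s. \<forall>i. s i \<in> S i}"

definition valid_setting ::
  "('i \<Rightarrow> real set) \<Rightarrow> ('i \<Rightarrow> ('i \<Rightarrow> real) \<Rightarrow> real) \<Rightarrow> bool" where
  "valid_setting S v \<longleftrightarrow>
     (\<forall>i. is_interval (S i) \<and> S i \<subseteq> {0..}) \<and>
     (\<forall>i. \<forall>s\<in>profiles S. v i s \<ge> 0) \<and>
     (\<forall>i j. \<forall>s\<in>profiles S. \<forall>t\<in>S j. s j \<le> t \<longrightarrow> v i s \<le> v i (s(j := t))) \<and>
     (\<forall>i. \<forall>s\<in>profiles S. \<forall>t\<in>S i. s i < t \<longrightarrow> v i s < v i (s(i := t)))"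

text \<open>A deterministic mechanism is a pair (x, p) of an allocation rule and a
payment rule, both mapping a bid profile and a bidder to a real number.\<close>

type_synonym 'i mechanism = "(('i \<Rightarrow> real) \<Rightarrow> 'i \<Rightarrow> real) \<times> (('i \<Rightarrow> real) \<Rightarrow> 'i \<Rightarrow> real)"

definition det_mechanism :: "('i::finite \<Rightarrow> real set) \<Rightarrow> 'i mechanism \<Rightarrow> bool" where
  "det_mechanism S M \<longleftrightarrow>
     (\<forall>b\<in>profiles S. (\<forall>i. fst M b i \<in> {0, 1}) \<and> (\<Sum>i\<in>UNIV. fst M b i) \<le> 1)"

definition utility ::
  "('i \<Rightarrow> ('i \<Rightarrow> real) \<Rightarrow> real) \<Rightarrow> 'i mechanism \<Rightarrow> 'i \<Rightarrow> ('i \<Rightarrow> real) \<Rightarrow> ('i \<Rightarrow> real) \<Rightarrow> real" where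
  "utility v M i b s = fst M b i * v i s - snd M b i"

definition expost_IC_IR ::
  "('i \<Rightarrow> real set) \<Rightarrow> ('i \<Rightarrow> ('i \<Rightarrow> real) \<Rightarrow> real) \<Rightarrow> 'i mechanism \<Rightarrow> bool" where
  "expost_IC_IR S v M \<longleftrightarrow>
     (\<forall>s\<in>profiles S. \<forall>i. \<forall>bi\<in>S i.
        utility v M i s s \<ge> max (utility v M i (s(i := bi)) s) 0)"

text \<open>A randomized mechanism: a family of mechanisms indexed by the sample
space of a probability space, almost every (here: every) realization being a
deterministic ex-post IC-IR mechanism.\<close>

definition universally_expost_IC_IR ::
  "('i::finite \<Rightarrow> real set) \<Rightarrow> ('i \<Rightarrow> ('i \<Rightarrow> real) \<Rightarrow> real) \<Rightarrow> 'w measure \<Rightarrow> ('w \<Rightarrow> 'i mechanism) \<Rightarrow> bool" where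
  "universally_expost_IC_IR S v P Mech \<longleftrightarrow>
     prob_space P \<and> (\<forall>\<omega>\<in>space P. det_mechanism S (Mech \<omega>) \<and> expost_IC_IR S v (Mech \<omega>))"

end

theory Submission
  imports Defs
begin

text \<open>Fix a realization of the mechanism and write t for b with bidder i's bid raised to
s i. Adding the two IC constraints between b and t gives the usual allocation
monotonicity x(b) \<le> x(t), since v i b < v i t. The IC constraint at t against
the deviation to b i then bounds the payment difference, so that
u(t; s) - u(b; s) \<ge> (x(t) - x(b)) (v i s - v i t) \<ge> 0, where v i t \<le> v i s
because t \<le> s coordinatewise.\<close>

lemma valid_setting_valuation_mono:
  fixes S :: "'i::finite \<Rightarrow> real set"
  assumes setting: "valid_setting S v"
    and s: "s \<in> profiles S" and t: "t \<in> profiles S" and le: "\<forall>j. t j \<le> s j"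
  shows "v i t \<le> v i s"
proof -
  define mix where "mix A = (\<lambda>j. if j \<in> A then s j else t j)" for A
  have mix_profile: "mix A \<in> profiles S" for A
    using s t by (auto simp: mix_def profiles_def)
  have "v i t \<le> v i (mix A)" if "finite A" for A
    using that
  proof (induction A rule: finite_induct)
    case empty
    then show ?case by (simp add: mix_def)
  next
    case (insert a A)
    have "mix (insert a A) = (mix A)(a := s a)"
      by (auto simp: mix_def)
    moreover have "v i (mix A) \<le> v i ((mix A)(a := s a))"
      using setting mix_profile[of A] s le insert.hyps
      unfolding valid_setting_def profiles_def by (simp add: mix_def)
    ultimately show ?case
      using insert.IH by (metis order_trans)
  qed
  from this[of UNIV] show ?thesis
    by (simp add: mix_def)
qed

lemma expost_IC_IR_deviation_le:
  assumes "expost_IC_IR S v M" and "s \<in> profiles S" and "c \<in> S i"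
  shows "utility v M i (s(i := c)) s \<le> utility v M i s s"
  using assms unfolding expost_IC_IR_def by fastforce

lemma expost_IC_IR_allocation_mono:
  assumes setting: "valid_setting S v" and IC: "expost_IC_IR S v M"
    and b: "b \<in> profiles S" and c: "c \<in> S i" and le: "b i \<le> c"
  shows "fst M b i \<le> fst M (b(i := c)) i"
proof (cases "b i = c")
  case True
  then show ?thesis by (simp flip: True)
next
  case False
  define t where "t = b(i := c)"
  have t: "t \<in> profiles S"
    using b c by (simp add: t_def profiles_def)
  have bi: "b i \<in> S i"
    using b by (simp add: profiles_def)
  have "utility v M i b t \<le> utility v M i t t"
    using expost_IC_IR_deviation_le[OF IC t bi] by (simp add: t_def)
  moreover have "utility v M i t b \<le> utility v M i b b"
    using expost_IC_IR_deviation_le[OF IC b c] by (simp add: t_def)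
  ultimately have "(fst M b i - fst M t i) * (v i t - v i b) \<le> 0"
    unfolding utility_def by (simp add: algebra_simps)
  moreover have "v i b < v i t"
    using setting b c le False unfolding valid_setting_def t_def by simp
  ultimately show ?thesis
    by (simp add: t_def mult_le_0_iff)
qed

lemma expost_IC_IR_no_overbidding_truthful_ge:
  fixes S :: "'i::finite \<Rightarrow> real set"
  assumes setting: "valid_setting S v" and IC: "expost_IC_IR S v M"
    and s: "s \<in> profiles S" and b: "b \<in> profiles S" and le: "\<forall>j. b j \<le> s j"
  shows "utility v M i b s \<le> utility v M i (b(i := s i)) s"
proof -
  define t where "t = b(i := s i)"
  have t: "t \<in> profiles S"
    using s b by (simp add: t_def profiles_def)
  have si: "s i \<in> S i" and bi: "b i \<in> S i"
    using s b by (simp_all add: profiles_def)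
  have x_mono: "fst M b i \<le> fst M t i"
    unfolding t_def using expost_IC_IR_allocation_mono[OF setting IC b si] le by simp
  have v_mono: "v i t \<le> v i s"
    using valid_setting_valuation_mono[OF setting s t] le by (simp add: t_def)
  have "utility v M i b t \<le> utility v M i t t"
    using expost_IC_IR_deviation_le[OF IC t bi] by (simp add: t_def)
  then have "utility v M i t s - utility v M i b s \<ge> (fst M t i - fst M b i) * (v i s - v i t)"
    unfolding utility_def by (simp add: algebra_simps)
  moreover have "(fst M t i - fst M b i) * (v i s - v i t) \<ge> 0"
    using x_mono v_mono by simp
  ultimately show ?thesis
    by (simp add: t_def)
qed

theorem mainTheorem7:
  fixes S :: "'i::finite \<Rightarrow> real set"
    and v :: "'i \<Rightarrow> ('i \<Rightarrow> real) \<Rightarrow> real"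
    and P :: "'w measure"
    and Mech :: "'w \<Rightarrow> 'i mechanism"
    and s b :: "'i \<Rightarrow> real"
    and i :: 'i
  assumes "valid_setting S v"
    and "universally_expost_IC_IR S v P Mech"
    and "s \<in> profiles S" and "b \<in> profiles S"
    and "\<forall>j. b j \<le> s j"
    and "integrable P (\<lambda>\<omega>. utility v (Mech \<omega>) i (b(i := s i)) s)"
    and "integrable P (\<lambda>\<omega>. utility v (Mech \<omega>) i b s)"
  shows "(\<integral>\<omega>. utility v (Mech \<omega>) i (b(i := s i)) s \<partial>P)
           \<ge> (\<integral>\<omega>. utility v (Mech \<omega>) i b s \<partial>P)"
  using assms(7,6)
proof (rule integral_mono)
  fix \<omega> assume "\<omega> \<in> space P"
  then have "expost_IC_IR S v (Mech \<omega>)"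
    using assms(2) unfolding universally_expost_IC_IR_def by simp
  then show "utility v (Mech \<omega>) i b s \<le> utility v (Mech \<omega>) i (b(i := s i)) s"
    using expost_IC_IR_no_overbidding_truthful_ge assms(1,3-5) by blast
qed

end
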